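(* Fix $\rho\in(\frac13,\frac12)$, $M>0$ and $\beta\in[-M,M]$, and a function $\chi\in C_c^\infty(\mathbb{R})$ with $0\leq\chi\leq1$, $\operatorname{supp}\chi\subset(-1,1)$ and $\chi=1$ on $[-\frac12,\frac12]$. For $h>0$ small, set $T=T_h=h^{\rho-\frac12}$, and let $X_{h,\beta}=L^2\big((0,T);(1-h^{1/2}\beta\tau)\,d\tau\big)$ with inner product $\langle u,v\rangle_{h,\beta}=\int_0^T u\bar v\,(1-h^{1/2}\beta\tau)\,d\tau$ and norm $\|u\|_{h,\beta}=\langle u,u\rangle_{h,\beta}^{1/2}$ (the weight is positive on $(0,T)$ for $h$ small). Let \[ u^{\rm app}_{h,\beta}(\tau)=\Big(1+\beta^2h\Big(\frac{\tau^2}{4}-\frac18\Big)\Big)\sqrt2\,e^{-\tau},\qquad v_h(\tau)=c_h\,\chi(T^{-1}\tau)\,u^{\rm app}_{h,\beta}(\tau), \] where $c_h>0$ is chosen so that $\|v_h\|_{h,\beta}=1$. Then there exist positive constants $m,h_0$ such that, if $h\in(0,h_0]$ and $g_h\in H^1(0,T)$ satisfies $\langle g_h,v_h\rangle_{h,\beta}=0$, then \[ \|g_h'\|_{h,\beta}^2-|g_h(0)|^2\geq m\,h^{1-2\rho}\|g_h\|_{h,\beta}^2. \] *)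

theory Defs
  imports "HOL-Analysis.Analysis"
begin

definition smooth_real :: "(real \<Rightarrow> real) \<Rightarrow> bool" where
  "smooth_real f \<longleftrightarrow> (\<exists>D :: nat \<Rightarrow> real \<Rightarrow> real. D 0 = f \<and>
       (\<forall>n x. (D n has_real_derivative D (Suc n) x) (at x)))"

definition tsupp :: "(real \<Rightarrow> real) \<Rightarrow> real set" where
  "tsupp f = closure {x. f x \<noteq> 0}"

definition Th :: "real \<Rightarrow> real \<Rightarrow> real" where
  "Th \<rho> h = h powr (\<rho> - 1/2)"

definition wt :: "real \<Rightarrow> real \<Rightarrow> real \<Rightarrow> real" where
  "wt h \<beta> \<tau> = 1 - sqrt h * \<beta> * \<tau>"

definition ip :: "real \<Rightarrow> real \<Rightarrow> real \<Rightarrow> (real \<Rightarrow> complex) \<Rightarrow> (real \<Rightarrow> complex) \<Rightarrow> complex" where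
  "ip \<rho> h \<beta> u v =
     (LINT \<tau>:{0<..<Th \<rho> h}|lborel. u \<tau> * cnj (v \<tau>) * complex_of_real (wt h \<beta> \<tau>))"

definition nrm :: "real \<Rightarrow> real \<Rightarrow> real \<Rightarrow> (real \<Rightarrow> complex) \<Rightarrow> real" where
  "nrm \<rho> h \<beta> u = sqrt (Re (ip \<rho> h \<beta> u u))"

definition uapp :: "real \<Rightarrow> real \<Rightarrow> real \<Rightarrow> real" where
  "uapp h \<beta> \<tau> = (1 + \<beta>^2 * h * (\<tau>^2 / 4 - 1/8)) * sqrt 2 * exp (- \<tau>)"

definition w0 :: "real \<Rightarrow> (real \<Rightarrow> real) \<Rightarrow> real \<Rightarrow> real \<Rightarrow> real \<Rightarrow> complex" where
  "w0 \<rho> chi h \<beta> \<tau> = complex_of_real (chi (\<tau> / Th \<rho> h) * uapp h \<beta> \<tau>)"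

definition ch :: "real \<Rightarrow> (real \<Rightarrow> real) \<Rightarrow> real \<Rightarrow> real \<Rightarrow> real" where
  "ch \<rho> chi h \<beta> = 1 / nrm \<rho> h \<beta> (w0 \<rho> chi h \<beta>)"

definition vh :: "real \<Rightarrow> (real \<Rightarrow> real) \<Rightarrow> real \<Rightarrow> real \<Rightarrow> real \<Rightarrow> complex" where
  "vh \<rho> chi h \<beta> \<tau> = complex_of_real (ch \<rho> chi h \<beta>) * w0 \<rho> chi h \<beta> \<tau>"

(* g in H^1(0,T) with weak derivative dg: dg is square integrable on (0,T)
   and g is (the continuous representative) g(t) = g(0) + int_0^t dg on [0,T]. *)
definition H1_deriv :: "real \<Rightarrow> (real \<Rightarrow> complex) \<Rightarrow> (real \<Rightarrow> complex) \<Rightarrow> bool" where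
  "H1_deriv T g dg \<longleftrightarrow>
     dg \<in> borel_measurable lborel \<and>
     set_integrable lborel {0<..<T} dg \<and>
     set_integrable lborel {0<..<T} (\<lambda>t. (cmod (dg t))^2) \<and>
     (\<forall>t\<in>{0..T}. g t = g 0 + (LINT s:{0<..<t}|lborel. dg s))"

end

theory Submission
  imports Defs
begin

text \<open>
  The form ||g'||^2 - |g(0)|^2 is the Robin form whose ground state sqrt 2 e^(-tau), with
  eigenvalue -1, is approximated by v_h. Write g = g(0) + G with G(t) = int_0^t g'. Orthogonality
  to F = v_h w (w the weight) and Fubini give g(0) int F = - int_0^T g'(s) (int_s^T F) ds; as the
  tails of F decay like e^(-s), Cauchy-Schwarz yields |g(0)|^2 <= 3/4 ||g'||^2, so the form is at
  least ||g'||^2 / 5. On the other hand |g(t)|^2 <= 2 |g(0)|^2 + 2 t ||g'||^2 bounds ||g||^2 by a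
  multiple of T^2 ||g'||^2, and T^(-2) = h^(1 - 2 rho). The weight stays within 1/100 of 1 on
  (0, T) because h^(1/2) T = h^rho.
\<close>

section \<open>Integrals over intervals\<close>

lemma set_integral_nonneg:
  fixes f :: "'a \<Rightarrow> real"
  assumes "\<And>x. x \<in> A \<Longrightarrow> 0 \<le> f x"
  shows "0 \<le> (LINT x:A|M. f x)"
  unfolding set_lebesgue_integral_def
  by (rule Bochner_Integration.integral_nonneg) (auto simp: assms split: split_indicator)

lemma set_integral_mono_set:
  fixes f :: "'a \<Rightarrow> real"
  assumes f: "set_integrable M B f" and A: "A \<in> sets M" "A \<subseteq> B"
    and nonneg: "\<And>x. x \<in> B \<Longrightarrow> 0 \<le> f x"
  shows "(LINT x:A|M. f x) \<le> (LINT x:B|M. f x)"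
proof -
  have "set_integrable M A f"
    using set_integrable_subset[OF f A] .
  with f show ?thesis
    using A nonneg unfolding set_lebesgue_integral_def set_integrable_def
    by (intro integral_mono) (auto split: split_indicator)
qed

lemma set_integral_mono':
  fixes f g :: "'a \<Rightarrow> real"
  assumes "set_integrable M A g" "\<And>x. x \<in> A \<Longrightarrow> f x \<le> g x" "\<And>x. x \<in> A \<Longrightarrow> 0 \<le> g x"
  shows "(LINT x:A|M. f x) \<le> (LINT x:A|M. g x)"
  using assms unfolding set_lebesgue_integral_def set_integrable_def
  by (intro integral_mono') (auto split: split_indicator)

lemma set_integrable_mult_bounded:
  fixes f K :: "'a \<Rightarrow> real"
  assumes f: "set_integrable M A f" and K_meas: "K \<in> borel_measurable M"
    and K_bound: "\<And>x. x \<in> A \<Longrightarrow> \<bar>K x\<bar> \<le> B"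
  shows "set_integrable M A (\<lambda>x. f x * K x)"
proof (rule set_integrable_bound)
  show "set_integrable M A (\<lambda>x. B * \<bar>f x\<bar>)"
    using set_integrable_abs[OF f] by simp
  have "(\<lambda>x. indicator A x *\<^sub>R f x) \<in> borel_measurable M"
    using f unfolding set_integrable_def by (rule borel_measurable_integrable)
  then have "(\<lambda>x. (indicator A x *\<^sub>R f x) * K x) \<in> borel_measurable M"
    using K_meas by measurable
  then show "set_borel_measurable M A (\<lambda>x. f x * K x)"
    unfolding set_borel_measurable_def by (simp add: mult.assoc)
  have "\<bar>f x * K x\<bar> \<le> \<bar>B * \<bar>f x\<bar>\<bar>" if "x \<in> A" for x
    using K_bound[OF that] by (simp add: abs_mult mult.commute[of B] mult_left_mono)
  then show "AE x in M. x \<in> A \<longrightarrow> norm (f x * K x) \<le> norm (B * \<bar>f x\<bar>)"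
    by auto
qed

lemma quadratic_nonneg_imp_discriminant_le:
  fixes a b c :: real
  assumes "0 \<le> c" and nonneg: "\<And>l. 0 \<le> a - 2 * l * b + l^2 * c"
  shows "b^2 \<le> a * c"
proof (cases "c = 0")
  case True
  have "b = 0"
  proof (rule ccontr)
    assume "b \<noteq> 0"
    then show False using nonneg[of "(a + 1) / (2 * b)"] True by simp
  qed
  with True show ?thesis by simp
next
  case False
  with \<open>0 \<le> c\<close> have "c > 0" by simp
  moreover have "0 \<le> a - 2 * (b / c) * b + (b / c)^2 * c" by (rule nonneg)
  ultimately show ?thesis by (simp add: power2_eq_square field_simps)
qed

lemma set_integral_Cauchy_Schwarz:
  fixes f g :: "'a \<Rightarrow> real"
  assumes "set_integrable M A (\<lambda>x. (f x)^2)" "set_integrable M A (\<lambda>x. (g x)^2)"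
    and "set_integrable M A (\<lambda>x. f x * g x)"
  shows "(LINT x:A|M. f x * g x)^2 \<le> (LINT x:A|M. (f x)^2) * (LINT x:A|M. (g x)^2)"
proof (rule quadratic_nonneg_imp_discriminant_le)
  show "0 \<le> (LINT x:A|M. (g x)^2)"
    by (rule set_integral_nonneg) simp
next
  fix l :: real
  have "0 \<le> (LINT x:A|M. (f x - l * g x)^2)"
    by (rule set_integral_nonneg) simp
  also have "\<dots> = (LINT x:A|M. ((f x)^2 - (2 * l) * (f x * g x)) + l^2 * (g x)^2)"
    by (simp add: power2_eq_square algebra_simps)
  also have "\<dots> = (LINT x:A|M. (f x)^2) - 2 * l * (LINT x:A|M. f x * g x) + l^2 * (LINT x:A|M. (g x)^2)"
    using assms by simp
  finally show "0 \<le> (LINT x:A|M. (f x)^2) - 2 * l * (LINT x:A|M. f x * g x) + l^2 * (LINT x:A|M. (g x)^2)" .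
qed

lemma continuous_on_set_integrable_Icc:
  fixes f :: "real \<Rightarrow> 'b::{banach, second_countable_topology}"
  assumes "continuous_on {a..b} f" "S \<in> sets lborel" "S \<subseteq> {a..b}"
  shows "set_integrable lborel S f"
proof -
  have "set_integrable lborel {a..b} f"
    unfolding set_integrable_def by (rule borel_integrable_compact) (use assms in auto)
  then show ?thesis using set_integrable_subset assms(2,3) by blast
qed

lemma set_integral_exp_Ioo:
  fixes c a b :: real
  assumes "c > 0" "a \<le> b"
  shows "(LINT t:{a<..<b}|lborel. exp (- c * t)) = (exp (- c * a) - exp (- c * b)) / c"
proof -
  have "(LINT t:{a<..<b}|lborel. exp (- c * t)) = (LBINT t=ereal a..ereal b. exp (- c * t))"
    using assms by (subst interval_integral_Ioo) auto
  also have "\<dots> = (- exp (- c * b) / c) - (- exp (- c * a) / c)"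
  proof (rule interval_integral_FTC_finite)
    fix x
    show "((\<lambda>t. - exp (- c * t) / c) has_vector_derivative exp (- c * x)) (at x within {min a b..max a b})"
      using assms by (auto intro!: derivative_eq_intros
          simp: has_real_derivative_iff_has_vector_derivative[symmetric])
  qed (intro continuous_intros)
  finally show ?thesis by (simp add: diff_divide_distrib)
qed

lemma set_integral_exp_lower_bound:
  fixes f :: "real \<Rightarrow> real"
  assumes f: "continuous_on {0..T} f" and nonneg: "\<And>t. t \<in> {0<..<T} \<Longrightarrow> 0 \<le> f t"
    and S: "0 \<le> S" "S \<le> T" and a: "a > 0"
    and lower: "\<And>t. t \<in> {0<..<S} \<Longrightarrow> c * exp (- a * t) \<le> f t"
  shows "c * (1 - exp (- a * S)) / a \<le> (LINT t:{0<..<T}|lborel. f t)"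
proof -
  have "c * (1 - exp (- a * S)) / a = (LINT t:{0<..<S}|lborel. c * exp (- a * t))"
    using set_integral_exp_Ioo[OF a S(1)] by simp
  also have "\<dots> \<le> (LINT t:{0<..<S}|lborel. f t)"
  proof (rule set_integral_mono)
    show "set_integrable lborel {0<..<S} (\<lambda>t. c * exp (- a * t))"
      by (rule continuous_on_set_integrable_Icc[of 0 S]) (auto intro!: continuous_intros)
    show "set_integrable lborel {0<..<S} f"
      by (rule continuous_on_set_integrable_Icc[OF f]) (use S in auto)
  qed (rule lower)
  also have "\<dots> \<le> (LINT t:{0<..<T}|lborel. f t)"
    by (rule set_integral_mono_set[OF continuous_on_set_integrable_Icc[OF f]])
      (use S nonneg in auto)
  finally show ?thesis .
qed

lemma integrable_triangle_mult:
  fixes d :: "real \<Rightarrow> complex" and F :: "real \<Rightarrow> real"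
  assumes d_meas [measurable]: "d \<in> borel_measurable lborel"
    and d_int: "set_integrable lborel {0<..<T} d" and F_cont: "continuous_on UNIV F"
  shows "integrable (lborel \<Otimes>\<^sub>M lborel)
           (\<lambda>(s, t). if 0 < s \<and> s < t \<and> t < T then d s * of_real (F t) else 0)"
proof -
  have [measurable]: "F \<in> borel_measurable lborel"
    using borel_measurable_continuous_onI[OF F_cont] by simp
  obtain B where B: "\<And>t. t \<in> {0..T} \<Longrightarrow> norm (F t) \<le> B"
    using continuous_on_compact_bound[OF compact_Icc continuous_on_subset[OF F_cont subset_UNIV]]
    by blast
  define \<Psi> where "\<Psi> s t = (indicator {0<..<T} s * norm (d s)) * (indicator {0<..<T} t * B)"
    for s t :: real
  have Psi_int: "integrable (lborel \<Otimes>\<^sub>M lborel) (\<lambda>(s, t). \<Psi> s t)"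
  proof (rule lborel_pair.Fubini_integrable)
    have "integrable lborel (\<lambda>s. indicator {0<..<T} s * norm (d s))"
      using set_integrable_norm[OF d_int] by (simp add: set_integrable_def)
    moreover have "(\<lambda>s. \<integral>t. norm (\<Psi> s t) \<partial>lborel) =
        (\<lambda>s. (indicator {0<..<T} s * norm (d s)) * (\<bar>B\<bar> * measure lborel {0<..<T}))"
      unfolding \<Psi>_def by (auto simp: abs_mult fun_eq_iff simp del: measure_lborel_Ioo)
    ultimately show "integrable lborel (\<lambda>s. \<integral>t. norm (case (s, t) of (s, t) \<Rightarrow> \<Psi> s t) \<partial>lborel)"
      by simp
  next
    show "(\<lambda>(s, t). \<Psi> s t) \<in> borel_measurable (lborel \<Otimes>\<^sub>M lborel)"
      unfolding \<Psi>_def by measurable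
  next
    have "emeasure lborel {0<..<T} < \<infinity>"
      by (cases "0 \<le> T") auto
    then have "integrable lborel (\<lambda>t. (indicator {0<..<T} s * norm (d s) * B) * indicator {0<..<T} t)"
      for s
      by (intro integrable_mult_right integrable_real_indicator) auto
    moreover have "(\<lambda>t. \<Psi> s t) = (\<lambda>t. (indicator {0<..<T} s * norm (d s) * B) * indicator {0<..<T} t)"
      for s
      unfolding \<Psi>_def by (simp add: fun_eq_iff mult_ac)
    ultimately show "AE s in lborel. integrable lborel (\<lambda>t. case (s, t) of (s, t) \<Rightarrow> \<Psi> s t)"
      by simp
  qed
  show ?thesis
  proof (rule Bochner_Integration.integrable_bound[OF Psi_int])
    show "(\<lambda>(s, t). if 0 < s \<and> s < t \<and> t < T then d s * of_real (F t) else 0)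
        \<in> borel_measurable (lborel \<Otimes>\<^sub>M lborel)"
      by measurable
    have "norm (if 0 < s \<and> s < t \<and> t < T then d s * of_real (F t) else 0) \<le> norm (\<Psi> s t)" for s t
      using B[of t] by (auto simp: \<Psi>_def norm_mult intro!: mult_left_mono)
    then show "AE x in lborel \<Otimes>\<^sub>M lborel.
        norm (case x of (s, t) \<Rightarrow> if 0 < s \<and> s < t \<and> t < T then d s * of_real (F t) else 0)
          \<le> norm (case x of (s, t) \<Rightarrow> \<Psi> s t)"
      by auto
  qed
qed

lemma set_integral_primitive_mult_swap:
  fixes d :: "real \<Rightarrow> complex" and F :: "real \<Rightarrow> real"
  assumes d_meas: "d \<in> borel_measurable lborel"
    and d_int: "set_integrable lborel {0<..<T} d" and F_cont: "continuous_on UNIV F"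
  shows "set_integrable lborel {0<..<T} (\<lambda>t. (LINT s:{0<..<t}|lborel. d s) * of_real (F t))"
    and "set_integrable lborel {0<..<T} (\<lambda>s. d s * of_real (LINT t:{s<..<T}|lborel. F t))"
    and "(LINT t:{0<..<T}|lborel. (LINT s:{0<..<t}|lborel. d s) * of_real (F t)) =
         (LINT s:{0<..<T}|lborel. d s * of_real (LINT t:{s<..<T}|lborel. F t))"
proof -
  define \<Phi> where "\<Phi> s t = (if 0 < s \<and> s < t \<and> t < T then d s * of_real (F t) else 0)" for s t
  have Phi_int: "integrable (lborel \<Otimes>\<^sub>M lborel) (\<lambda>(s, t). \<Phi> s t)"
    unfolding \<Phi>_def by (rule integrable_triangle_mult[OF d_meas d_int F_cont])
  have inner_t: "(\<integral>t. \<Phi> s t \<partial>lborel) =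
      indicator {0<..<T} s *\<^sub>R (d s * of_real (LINT t:{s<..<T}|lborel. F t))" for s
  proof -
    have "(\<lambda>t. \<Phi> s t) =
        (\<lambda>t. indicator {0<..<T} s *\<^sub>R (d s * (indicator {s<..<T} t *\<^sub>R complex_of_real (F t))))"
      unfolding \<Phi>_def by (auto split: split_indicator)
    then have "(\<integral>t. \<Phi> s t \<partial>lborel) = indicator {0<..<T} s *\<^sub>R
        (\<integral>t. d s * (indicator {s<..<T} t *\<^sub>R complex_of_real (F t)) \<partial>lborel)"
      by (simp only: integral_scaleR_right)
    also have "\<dots> = indicator {0<..<T} s *\<^sub>R (d s * (LINT t:{s<..<T}|lborel. complex_of_real (F t)))"
      unfolding set_lebesgue_integral_def by (subst integral_mult_right_zero) (rule refl)
    finally show ?thesis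
      by (simp add: set_integral_complex_of_real)
  qed
  have inner_s: "(\<integral>s. \<Phi> s t \<partial>lborel) =
      indicator {0<..<T} t *\<^sub>R ((LINT s:{0<..<t}|lborel. d s) * of_real (F t))" for t
  proof -
    have "(\<lambda>s. \<Phi> s t) =
        (\<lambda>s. indicator {0<..<T} t *\<^sub>R ((indicator {0<..<t} s *\<^sub>R d s) * complex_of_real (F t)))"
      unfolding \<Phi>_def by (auto split: split_indicator)
    then have "(\<integral>s. \<Phi> s t \<partial>lborel) = indicator {0<..<T} t *\<^sub>R
        (\<integral>s. (indicator {0<..<t} s *\<^sub>R d s) * complex_of_real (F t) \<partial>lborel)"
      by (simp only: integral_scaleR_right)
    also have "\<dots> = indicator {0<..<T} t *\<^sub>R ((LINT s:{0<..<t}|lborel. d s) * of_real (F t))"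
      unfolding set_lebesgue_integral_def by (subst integral_mult_left_zero) (rule refl)
    finally show ?thesis .
  qed
  show "set_integrable lborel {0<..<T} (\<lambda>t. (LINT s:{0<..<t}|lborel. d s) * of_real (F t))"
    using lborel_pair.integrable_snd[OF Phi_int] unfolding inner_s set_integrable_def .
  show "set_integrable lborel {0<..<T} (\<lambda>s. d s * of_real (LINT t:{s<..<T}|lborel. F t))"
    using lborel_pair.integrable_fst[OF Phi_int] unfolding inner_t set_integrable_def .
  show "(LINT t:{0<..<T}|lborel. (LINT s:{0<..<t}|lborel. d s) * of_real (F t)) =
        (LINT s:{0<..<T}|lborel. d s * of_real (LINT t:{s<..<T}|lborel. F t))"
    using lborel_pair.Fubini_integral[OF Phi_int]
    unfolding inner_s inner_t set_lebesgue_integral_def .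
qed

section \<open>Functions in H^1(0, T)\<close>

lemma H1_derivD:
  assumes "H1_deriv T g d"
  shows "d \<in> borel_measurable lborel" "set_integrable lborel {0<..<T} d"
    and "set_integrable lborel {0<..<T} (\<lambda>t. (cmod (d t))^2)"
    and "\<And>t. t \<in> {0..T} \<Longrightarrow> g t = g 0 + (LINT s:{0<..<t}|lborel. d s)"
  using assms unfolding H1_deriv_def by blast+

lemma H1_increment_sq_le:
  assumes H1: "H1_deriv T g d" and t: "t \<in> {0..T}"
  shows "(cmod (g t - g 0))^2 \<le> t * (LINT s:{0<..<T}|lborel. (cmod (d s))^2)"
proof -
  note d = H1_derivD[OF H1]
  have sub: "{0<..<t} \<subseteq> {0<..<T}" using t by auto
  have d2_int: "set_integrable lborel {0<..<t} (\<lambda>s. (cmod (d s))^2)"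
    using set_integrable_subset[OF d(3) _ sub] by simp
  have d_int: "set_integrable lborel {0<..<t} (\<lambda>s. cmod (d s))"
    using set_integrable_subset[OF set_integrable_norm[OF d(2)] _ sub] by simp
  have "cmod (g t - g 0) \<le> (LINT s:{0<..<t}|lborel. cmod (d s) * 1)"
    using d(4)[OF t] set_integral_norm_bound[OF set_integrable_subset[OF d(2) _ sub]] by simp
  then have "(cmod (g t - g 0))^2 \<le> (LINT s:{0<..<t}|lborel. cmod (d s) * 1)^2"
    by (rule power_mono) simp
  also have "\<dots> \<le> (LINT s:{0<..<t}|lborel. (cmod (d s))^2) * (LINT s:{0<..<t}|lborel. 1^2)"
  proof (rule set_integral_Cauchy_Schwarz)
    show "set_integrable lborel {0<..<t} (\<lambda>s. (1::real)^2)"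
      by (rule continuous_on_set_integrable_Icc[of 0 t]) auto
  qed (use d2_int d_int in auto)
  also have "\<dots> = t * (LINT s:{0<..<t}|lborel. (cmod (d s))^2)"
    using t by (simp add: set_integral_const)
  also have "\<dots> \<le> t * (LINT s:{0<..<T}|lborel. (cmod (d s))^2)"
    using t by (intro mult_left_mono set_integral_mono_set[OF d(3)] sub) auto
  finally show ?thesis .
qed

lemma H1_orthogonal_boundary_value:
  assumes H1: "H1_deriv T g d" and F_cont: "continuous_on UNIV F"
    and orth: "(LINT t:{0<..<T}|lborel. g t * of_real (F t)) = 0"
  shows "g 0 * of_real (LINT t:{0<..<T}|lborel. F t) =
         - (LINT s:{0<..<T}|lborel. d s * of_real (LINT t:{s<..<T}|lborel. F t))"
proof -
  note d = H1_derivD[OF H1]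
  note swap = set_integral_primitive_mult_swap[OF d(1,2) F_cont]
  define G where "G t = (LINT s:{0<..<t}|lborel. d s)" for t
  have F_int: "set_integrable lborel {0<..<T} (\<lambda>t. complex_of_real (F t))"
    by (rule continuous_on_set_integrable_Icc[of 0 T])
      (auto intro!: continuous_intros intro: continuous_on_subset[OF F_cont])
  have "g t * of_real (F t) = g 0 * of_real (F t) + G t * of_real (F t)" if "t \<in> {0<..<T}" for t
    using d(4)[of t] that unfolding G_def by (simp add: distrib_right)
  then have "0 = (LINT t:{0<..<T}|lborel. g 0 * of_real (F t) + G t * of_real (F t))"
    unfolding orth[symmetric] by (intro set_lebesgue_integral_cong) simp_all
  also have "\<dots> = g 0 * of_real (LINT t:{0<..<T}|lborel. F t) +
      (LINT t:{0<..<T}|lborel. G t * of_real (F t))"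
    using F_int swap(1) unfolding G_def by (simp add: set_integral_complex_of_real)
  also have "(LINT t:{0<..<T}|lborel. G t * of_real (F t)) =
      (LINT s:{0<..<T}|lborel. d s * of_real (LINT t:{s<..<T}|lborel. F t))"
    unfolding G_def by (rule swap(3))
  finally show ?thesis
    by (simp add: eq_neg_iff_add_eq_0)
qed

lemma H1_orthogonal_boundary_value_norm_le:
  assumes H1: "H1_deriv T g d" and F_cont: "continuous_on UNIV F"
    and F_nonneg: "\<And>t. t \<in> {0<..<T} \<Longrightarrow> 0 \<le> F t"
    and orth: "(LINT t:{0<..<T}|lborel. g t * of_real (F t)) = 0"
    and mass_pos: "0 < (LINT t:{0<..<T}|lborel. F t)"
    and K_int: "set_integrable lborel {0<..<T} (\<lambda>s. cmod (d s) * K s)"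
    and tail_le: "\<And>s. s \<in> {0<..<T} \<Longrightarrow> (LINT t:{s<..<T}|lborel. F t) \<le> K s"
  shows "cmod (g 0) * (LINT t:{0<..<T}|lborel. F t) \<le> (LINT s:{0<..<T}|lborel. cmod (d s) * K s)"
proof -
  note d = H1_derivD[OF H1]
  define tail where "tail s = (LINT t:{s<..<T}|lborel. F t)" for s
  have tail_nonneg: "0 \<le> tail s" if "s \<in> {0<..<T}" for s
    unfolding tail_def by (rule set_integral_nonneg) (use that F_nonneg in auto)
  have "cmod (g 0) * (LINT t:{0<..<T}|lborel. F t) = cmod (g 0 * of_real (LINT t:{0<..<T}|lborel. F t))"
    using mass_pos by (simp add: norm_mult)
  also have "\<dots> = cmod (LINT s:{0<..<T}|lborel. d s * of_real (tail s))"
    unfolding tail_def H1_orthogonal_boundary_value[OF H1 F_cont orth] by simp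
  also have "\<dots> \<le> (LINT s:{0<..<T}|lborel. cmod (d s * of_real (tail s)))"
    by (rule set_integral_norm_bound)
      (use set_integral_primitive_mult_swap(2)[OF d(1,2) F_cont] in \<open>simp add: tail_def\<close>)
  also have "\<dots> \<le> (LINT s:{0<..<T}|lborel. cmod (d s) * K s)"
  proof (rule set_integral_mono')
    fix s assume s: "s \<in> {0<..<T}"
    then show "cmod (d s * of_real (tail s)) \<le> cmod (d s) * K s"
      using tail_nonneg tail_le unfolding tail_def by (simp add: norm_mult mult_left_mono)
    have "0 \<le> K s"
      using tail_nonneg[OF s] tail_le[OF s] unfolding tail_def by linarith
    then show "0 \<le> cmod (d s) * K s"
      by simp
  qed (rule K_int)
  finally show ?thesis .
qed

lemma H1_orthogonal_boundary_value_sq_le: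
  assumes H1: "H1_deriv T g d" and F_cont: "continuous_on UNIV F"
    and F_nonneg: "\<And>t. t \<in> {0<..<T} \<Longrightarrow> 0 \<le> F t"
    and orth: "(LINT t:{0<..<T}|lborel. g t * of_real (F t)) = 0"
    and mass_pos: "0 < (LINT t:{0<..<T}|lborel. F t)"
    and K_cont: "continuous_on UNIV K"
    and tail_le: "\<And>s. s \<in> {0<..<T} \<Longrightarrow> (LINT t:{s<..<T}|lborel. F t) \<le> K s"
    and K_sq_le: "(LINT s:{0<..<T}|lborel. (K s)^2) \<le> c * (LINT t:{0<..<T}|lborel. F t)^2"
  shows "(cmod (g 0))^2 \<le> c * (LINT t:{0<..<T}|lborel. (cmod (d t))^2)"
proof -
  note d = H1_derivD[OF H1]
  define A where "A = (LINT t:{0<..<T}|lborel. F t)"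
  define D where "D = (LINT t:{0<..<T}|lborel. (cmod (d t))^2)"
  obtain B where B: "\<And>s. s \<in> {0..T} \<Longrightarrow> norm (K s) \<le> B"
    using continuous_on_compact_bound[OF compact_Icc continuous_on_subset[OF K_cont subset_UNIV]]
    by blast
  have dK_int: "set_integrable lborel {0<..<T} (\<lambda>s. cmod (d s) * K s)"
    by (rule set_integrable_mult_bounded[OF set_integrable_norm[OF d(2)], where B = B])
      (use B borel_measurable_continuous_onI[OF K_cont] in auto)
  have "(cmod (g 0) * A)^2 \<le> (LINT s:{0<..<T}|lborel. cmod (d s) * K s)^2"
    using H1_orthogonal_boundary_value_norm_le[OF H1 F_cont F_nonneg orth mass_pos dK_int tail_le]
      mass_pos unfolding A_def by (intro power_mono) auto
  also have "\<dots> \<le> D * (LINT s:{0<..<T}|lborel. (K s)^2)"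
    unfolding D_def
  proof (rule set_integral_Cauchy_Schwarz)
    show "set_integrable lborel {0<..<T} (\<lambda>s. (K s)^2)"
      by (rule continuous_on_set_integrable_Icc[of 0 T])
        (auto intro!: continuous_intros intro: continuous_on_subset[OF K_cont])
  qed (use d(3) dK_int in auto)
  also have "\<dots> \<le> D * (c * A^2)"
    using K_sq_le unfolding A_def D_def
    by (intro mult_left_mono set_integral_nonneg) auto
  finally show ?thesis
    using mass_pos unfolding A_def D_def by (simp add: power_mult_distrib algebra_simps)
qed

lemma H1_sq_le:
  assumes H1: "H1_deriv T g d" and t: "t \<in> {0..T}"
  shows "(cmod (g t))^2 \<le> 2 * (cmod (g 0))^2 + 2 * (t * (LINT s:{0<..<T}|lborel. (cmod (d s))^2))"
proof -
  have "cmod (g t) \<le> cmod (g 0) + cmod (g t - g 0)"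
    by (metis add.commute diff_add_cancel norm_triangle_ineq)
  then have "(cmod (g t))^2 \<le> (cmod (g 0) + cmod (g t - g 0))^2"
    by (rule power_mono) simp
  also have "\<dots> \<le> 2 * (cmod (g 0))^2 + 2 * (cmod (g t - g 0))^2"
    using sum_squares_bound[of "cmod (g 0)" "cmod (g t - g 0)"] by (simp add: power2_sum)
  finally show ?thesis
    using H1_increment_sq_le[OF H1 t] by linarith
qed

lemma weighted_Robin_form_lower_bound:
  assumes T: "1 \<le> T" and H1: "H1_deriv T g d" and w_meas: "w \<in> borel_measurable lborel"
    and w_close: "\<And>t. t \<in> {0<..<T} \<Longrightarrow> \<bar>w t - 1\<bar> \<le> 1/100"
    and g0_le: "(cmod (g 0))^2 \<le> 3/4 * (LINT t:{0<..<T}|lborel. (cmod (d t))^2)"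
  shows "1/(25 * T^2) * (LINT t:{0<..<T}|lborel. (cmod (g t))^2 * w t)
           \<le> (LINT t:{0<..<T}|lborel. (cmod (d t))^2 * w t) - (cmod (g 0))^2"
proof -
  note d = H1_derivD[OF H1]
  define D where "D = (LINT t:{0<..<T}|lborel. (cmod (d t))^2)"
  have D_nonneg: "0 \<le> D"
    unfolding D_def by (rule set_integral_nonneg) simp
  have w_bounds: "99/100 \<le> w t" "w t \<le> 101/100" if "t \<in> {0<..<T}" for t
    using abs_le_D1[OF w_close[OF that]] abs_le_D2[OF w_close[OF that]] by linarith+
  have g_sq_le: "(cmod (g t))^2 * w t \<le> 4 * D * T * (101/100)" if t: "t \<in> {0<..<T}" for t
  proof -
    have "t * D \<le> T * D"
      using t D_nonneg by (intro mult_right_mono) auto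
    then have "(cmod (g t))^2 \<le> 2 * (3/4 * D) + 2 * (T * D)"
      using H1_sq_le[OF H1, of t] g0_le t unfolding D_def by simp
    also have "\<dots> \<le> 4 * D * T"
      using mult_left_mono[OF T D_nonneg] D_nonneg by simp
    finally show ?thesis
      using w_bounds[OF t] T D_nonneg by (intro mult_mono) auto
  qed
  have "(LINT t:{0<..<T}|lborel. (cmod (g t))^2 * w t) \<le> (LINT t:{0<..<T}|lborel. 4 * D * T * (101/100))"
  proof (rule set_integral_mono')
    show "set_integrable lborel {0<..<T} (\<lambda>t. 4 * D * T * (101/100))"
      by (rule continuous_on_set_integrable_Icc[of 0 T]) auto
  qed (use g_sq_le D_nonneg T in auto)
  also have "\<dots> = T^2 * (4 * D * (101/100))"
    using T by (simp add: set_integral_const power2_eq_square)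
  finally have g_norm: "1/(25 * T^2) * (LINT t:{0<..<T}|lborel. (cmod (g t))^2 * w t) \<le> 4 * D * (101/100) / 25"
    using T by (simp add: field_simps)
  have dw_int: "set_integrable lborel {0<..<T} (\<lambda>t. (cmod (d t))^2 * w t)"
    by (rule set_integrable_mult_bounded[OF d(3) w_meas, where B = "101/100"]) (use w_bounds in force)
  have "(99/100) * D = (LINT t:{0<..<T}|lborel. (cmod (d t))^2 * (99/100))"
    unfolding D_def by simp
  also have "\<dots> \<le> (LINT t:{0<..<T}|lborel. (cmod (d t))^2 * w t)"
  proof (rule set_integral_mono)
    fix t assume "t \<in> {0<..<T}"
    then show "(cmod (d t))^2 * (99/100) \<le> (cmod (d t))^2 * w t"
      using w_bounds(1) by (intro mult_left_mono) auto
  qed (use d(3) dw_int in auto)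
  finally show ?thesis
    using g_norm g0_le D_nonneg unfolding D_def by linarith
qed

section \<open>The cut-off approximate ground state\<close>

lemma uapp_ge:
  assumes "0 \<le> h" "\<beta>^2 * h \<le> 1/200"
  shows "1599/1600 * (sqrt 2 * exp (- t)) \<le> uapp h \<beta> t"
proof -
  have "0 \<le> \<beta>^2 * h * t^2 / 4" using assms(1) by simp
  then have "1599/1600 \<le> 1 + \<beta>^2 * h * (t^2 / 4 - 1/8)"
    using assms(2) by (simp add: algebra_simps)
  then show ?thesis
    unfolding uapp_def mult.assoc by (intro mult_right_mono) auto
qed

lemma uapp_nonneg:
  assumes "0 \<le> h" "\<beta>^2 * h \<le> 1/200"
  shows "0 \<le> uapp h \<beta> t"
proof -
  have "0 \<le> 1599/1600 * (sqrt 2 * exp (- t))" by simp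
  with uapp_ge[OF assms, of t] show ?thesis by linarith
qed

text \<open>The quadratic correction of u_app costs only a factor e^(t/20) against e^(-t).\<close>

lemma uapp_le:
  assumes "0 \<le> h" "\<beta>^2 * h \<le> 1/200" "0 \<le> t"
  shows "uapp h \<beta> t \<le> sqrt 2 * exp (- (19/20) * t)"
proof -
  have "\<beta>^2 * h * t^2 \<le> 1/200 * t^2"
    using assms(2) by (intro mult_right_mono) auto
  moreover have "\<beta>^2 * h * (t^2 / 4 - 1/8) = \<beta>^2 * h * t^2 / 4 - \<beta>^2 * h / 8"
    by (simp add: algebra_simps)
  moreover have "(t/20)^2 / 2 = t^2 / 800"
    by (simp add: power_divide)
  moreover have "0 \<le> \<beta>^2 * h"
    using assms(1) by simp
  ultimately have "1 + \<beta>^2 * h * (t^2 / 4 - 1/8) \<le> 1 + t/20 + (t/20)^2 / 2"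
    using assms(3) by linarith
  also have "\<dots> \<le> exp (t/20)"
    using assms(3) by (intro exp_lower_Taylor_quadratic) simp
  finally have "uapp h \<beta> t \<le> exp (t/20) * (sqrt 2 * exp (- t))"
    unfolding uapp_def mult.assoc by (intro mult_right_mono) auto
  also have "\<dots> = sqrt 2 * exp (- (19/20) * t)"
    by (simp add: exp_add[symmetric])
  finally show ?thesis .
qed

lemma exp_neg_half_le:
  fixes T :: real
  assumes "200 \<le> T"
  shows "exp (- (T/2)) \<le> 1/100"
proof -
  have "100 \<le> exp (T/2)"
    using exp_ge_add_one_self[of "T/2"] assms by linarith
  then show ?thesis
    by (simp add: exp_minus field_simps)
qed

lemma continuous_on_wt: "continuous_on UNIV (wt h \<beta>)"
  unfolding wt_def by (intro continuous_intros)

locale cutoff_ground_state =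
  fixes T h \<beta> :: real and chi :: "real \<Rightarrow> real"
  assumes T_ge: "200 \<le> T" and h_nonneg: "0 \<le> h" and \<beta>_h: "\<beta>^2 * h \<le> 1/200"
    and wt_close: "\<And>t. t \<in> {0<..<T} \<Longrightarrow> \<bar>wt h \<beta> t - 1\<bar> \<le> 1/100"
    and chi_cont: "continuous_on UNIV chi"
    and chi_range: "\<And>x. 0 \<le> chi x \<and> chi x \<le> 1"
    and chi_one: "\<And>x. x \<in> {0..1/2} \<Longrightarrow> chi x = 1"
begin

definition profile :: "real \<Rightarrow> real" where
  "profile t = chi (t / T) * uapp h \<beta> t"

lemma wt_bounds:
  assumes "t \<in> {0<..<T}"
  shows "99/100 \<le> wt h \<beta> t" "wt h \<beta> t \<le> 101/100"
  using abs_le_D1[OF wt_close[OF assms]] abs_le_D2[OF wt_close[OF assms]] by linarith+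

lemma continuous_on_profile: "continuous_on UNIV profile"
proof -
  have "continuous_on UNIV (\<lambda>t. chi (t / T))"
    by (rule continuous_on_compose2[OF chi_cont]) (use T_ge in \<open>auto intro!: continuous_intros\<close>)
  then show ?thesis
    unfolding profile_def uapp_def by (auto intro!: continuous_intros)
qed

lemma profile_nonneg: "0 \<le> profile t"
  unfolding profile_def using chi_range uapp_nonneg[OF h_nonneg \<beta>_h] by simp

lemma profile_le:
  assumes "0 \<le> t"
  shows "profile t \<le> sqrt 2 * exp (- (19/20) * t)"
proof -
  have "profile t \<le> uapp h \<beta> t"
    unfolding profile_def using chi_range[of "t / T"] uapp_nonneg[OF h_nonneg \<beta>_h]
    by (simp add: mult_left_le_one_le)
  also have "\<dots> \<le> sqrt 2 * exp (- (19/20) * t)"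
    by (rule uapp_le[OF h_nonneg \<beta>_h assms])
  finally show ?thesis .
qed

lemma profile_ge:
  assumes "t \<in> {0<..<T/2}"
  shows "1599/1600 * (sqrt 2 * exp (- t)) \<le> profile t"
proof -
  have "t / T \<in> {0..1/2}"
    using assms T_ge by (auto simp: field_simps)
  then show ?thesis
    using uapp_ge[OF h_nonneg \<beta>_h] chi_one unfolding profile_def by simp
qed

lemma weighted_profile_nonneg: "t \<in> {0<..<T} \<Longrightarrow> 0 \<le> profile t * wt h \<beta> t"
  using profile_nonneg wt_bounds(1)[of t] by simp

lemma weighted_profile_mass_ge: "sqrt 2 * (95/100) \<le> (LINT t:{0<..<T}|lborel. profile t * wt h \<beta> t)"
proof -
  let ?c = "99/100 * (1599/1600) * sqrt 2"
  have "?c * exp (- 1 * t) \<le> profile t * wt h \<beta> t" if t: "t \<in> {0<..<T/2}" for t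
  proof -
    have "?c * exp (- 1 * t) = 1599/1600 * (sqrt 2 * exp (- t)) * (99/100)"
      by simp
    also have "\<dots> \<le> profile t * wt h \<beta> t"
      using profile_ge[OF t] wt_bounds(1)[of t] t profile_nonneg by (intro mult_mono) auto
    finally show ?thesis .
  qed
  then have "?c * (1 - exp (- 1 * (T/2))) / 1 \<le> (LINT t:{0<..<T}|lborel. profile t * wt h \<beta> t)"
    using T_ge weighted_profile_nonneg
    by (intro set_integral_exp_lower_bound) (auto intro!: continuous_intros continuous_on_profile
        continuous_on_wt intro: continuous_on_subset)
  moreover have "sqrt 2 * (95/100) \<le> ?c * (1 - exp (- 1 * (T/2))) / 1"
    using exp_neg_half_le[OF T_ge] by simp
  ultimately show ?thesis by linarith
qed

lemma weighted_profile_tail_le: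
  assumes s: "s \<in> {0<..<T}"
  shows "(LINT t:{s<..<T}|lborel. profile t * wt h \<beta> t)
           \<le> 101/100 * sqrt 2 * (20/19) * exp (- (19/20) * s)"
proof -
  have "(LINT t:{s<..<T}|lborel. profile t * wt h \<beta> t)
      \<le> (LINT t:{s<..<T}|lborel. 101/100 * sqrt 2 * exp (- (19/20) * t))"
  proof (rule set_integral_mono)
    fix t assume t: "t \<in> {s<..<T}"
    then have "profile t * wt h \<beta> t \<le> sqrt 2 * exp (- (19/20) * t) * (101/100)"
      using s profile_le[of t] profile_nonneg wt_bounds[of t] by (intro mult_mono) auto
    then show "profile t * wt h \<beta> t \<le> 101/100 * sqrt 2 * exp (- (19/20) * t)"
      by simp
  qed (auto intro!: continuous_on_set_integrable_Icc[of s T] continuous_intros continuous_on_profile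
      continuous_on_wt intro: continuous_on_subset)
  also have "\<dots> = 101/100 * sqrt 2 * ((exp (- (19/20) * s) - exp (- (19/20) * T)) / (19/20))"
    using set_integral_exp_Ioo[of "19/20" s T] s by simp
  also have "\<dots> \<le> 101/100 * sqrt 2 * (20/19) * exp (- (19/20) * s)"
    by simp
  finally show ?thesis .
qed

lemma tail_majorant_sq_integral_le:
  "(LINT s:{0<..<T}|lborel. (101/100 * sqrt 2 * (20/19) * exp (- (19/20) * s))^2)
     \<le> 3/4 * (LINT t:{0<..<T}|lborel. profile t * wt h \<beta> t)^2"
proof -
  let ?C = "101/100 * sqrt 2 * (20/19)"
  have "(exp (- (19/20) * s))^2 = exp (- (19/10) * s)" for s :: real
    using exp_double[of "- (19/20) * s"] by simp
  then have "(LINT s:{0<..<T}|lborel. (?C * exp (- (19/20) * s))^2)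
      = (LINT s:{0<..<T}|lborel. ?C^2 * exp (- (19/10) * s))"
    by (simp only: power_mult_distrib)
  also have "\<dots> = ?C^2 * (LINT s:{0<..<T}|lborel. exp (- (19/10) * s))"
    by (rule set_integral_mult_right)
  also have "\<dots> = (101/100 * sqrt 2 * (20/19))^2 * ((1 - exp (- (19/10) * T)) / (19/10))"
    using set_integral_exp_Ioo[of "19/10" 0 T] T_ge by simp
  also have "\<dots> \<le> (101/100 * sqrt 2 * (20/19))^2 * (10/19)"
    by (intro mult_left_mono) auto
  also have "\<dots> \<le> 3/4 * (sqrt 2 * (95/100))^2"
    by (simp add: power_mult_distrib power_divide)
  also have "\<dots> \<le> 3/4 * (LINT t:{0<..<T}|lborel. profile t * wt h \<beta> t)^2"
    using weighted_profile_mass_ge by (intro mult_left_mono power_mono) auto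
  finally show ?thesis .
qed

lemma profile_sq_integral_pos: "0 < (LINT t:{0<..<T}|lborel. (profile t)^2 * wt h \<beta> t)"
proof -
  have "1 * exp (- 2 * t) \<le> (profile t)^2 * wt h \<beta> t" if t: "t \<in> {0<..<T/2}" for t
  proof -
    have "1 * exp (- 2 * t) \<le> ((1599/1600)^2 * 2 * (99/100)) * exp (- 2 * t)"
      by (intro mult_right_mono) (auto simp: power2_eq_square)
    also have "\<dots> = (1599/1600)^2 * (sqrt 2)^2 * (exp (- t))^2 * (99/100)"
      using exp_double[of "- t"] by simp
    also have "\<dots> = (1599/1600 * (sqrt 2 * exp (- t)))^2 * (99/100)"
      by (simp only: power_mult_distrib mult.assoc)
    also have "\<dots> \<le> (profile t)^2 * wt h \<beta> t"
      using profile_ge[OF t] wt_bounds[of t] t by (intro mult_mono power_mono) auto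
    finally show ?thesis .
  qed
  moreover have "0 \<le> (profile t)^2 * wt h \<beta> t" if "t \<in> {0<..<T}" for t
    using wt_bounds(1)[OF that] by simp
  ultimately have "1 * (1 - exp (- 2 * (T/2))) / 2 \<le> (LINT t:{0<..<T}|lborel. (profile t)^2 * wt h \<beta> t)"
    using T_ge
    by (intro set_integral_exp_lower_bound) (auto intro!: continuous_intros continuous_on_profile
        continuous_on_wt intro: continuous_on_subset)
  moreover have "0 < 1 * (1 - exp (- 2 * (T/2))) / 2"
    using T_ge by simp
  ultimately show ?thesis by linarith
qed

lemma orthogonal_Robin_form_lower_bound:
  assumes H1: "H1_deriv T g d"
    and orth: "(LINT t:{0<..<T}|lborel. g t * of_real (profile t * wt h \<beta> t)) = 0"
  shows "1/(25 * T^2) * (LINT t:{0<..<T}|lborel. (cmod (g t))^2 * wt h \<beta> t)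
           \<le> (LINT t:{0<..<T}|lborel. (cmod (d t))^2 * wt h \<beta> t) - (cmod (g 0))^2"
proof (rule weighted_Robin_form_lower_bound[OF _ H1 _ wt_close])
  show "(cmod (g 0))^2 \<le> 3/4 * (LINT t:{0<..<T}|lborel. (cmod (d t))^2)"
  proof (rule H1_orthogonal_boundary_value_sq_le[OF H1 _ weighted_profile_nonneg orth,
        where K = "\<lambda>s. 101/100 * sqrt 2 * (20/19) * exp (- (19/20) * s)"])
    show "0 < (LINT t:{0<..<T}|lborel. profile t * wt h \<beta> t)"
      using weighted_profile_mass_ge real_sqrt_gt_zero[of 2] by linarith
    show "\<And>s. s \<in> {0<..<T} \<Longrightarrow> (LINT t:{s<..<T}|lborel. profile t * wt h \<beta> t)
        \<le> 101/100 * sqrt 2 * (20/19) * exp (- (19/20) * s)"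
      by (rule weighted_profile_tail_le)
    show "(LINT s:{0<..<T}|lborel. (101/100 * sqrt 2 * (20/19) * exp (- (19/20) * s))^2)
        \<le> 3/4 * (LINT t:{0<..<T}|lborel. profile t * wt h \<beta> t)^2"
      by (rule tail_majorant_sq_integral_le)
  qed (auto intro!: continuous_intros continuous_on_profile continuous_on_wt)
qed (use T_ge in \<open>auto intro!: borel_measurable_continuous_onI continuous_on_wt\<close>)

end

section \<open>The weighted space X_{h,\<beta>}\<close>

lemma sqrt_mult_Th: "0 < h \<Longrightarrow> sqrt h * Th \<rho> h = h powr \<rho>"
  by (simp add: Th_def powr_half_sqrt[symmetric] powr_add[symmetric])

lemma powr_eq_inverse_Th_sq: "0 < h \<Longrightarrow> h powr (1 - 2 * \<rho>) = 1 / (Th \<rho> h)^2"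
  by (simp add: Th_def power2_eq_square powr_add[symmetric] powr_minus_divide[symmetric])

lemma nrm_sq_eq:
  assumes "\<And>t. t \<in> {0<..<Th \<rho> h} \<Longrightarrow> 0 \<le> wt h \<beta> t"
  shows "(nrm \<rho> h \<beta> u)^2 = (LINT t:{0<..<Th \<rho> h}|lborel. (cmod (u t))^2 * wt h \<beta> t)"
proof -
  have "u t * cnj (u t) * complex_of_real (wt h \<beta> t) = complex_of_real ((cmod (u t))^2 * wt h \<beta> t)" for t
    by (simp only: of_real_mult complex_norm_square)
  then have "ip \<rho> h \<beta> u u = of_real (LINT t:{0<..<Th \<rho> h}|lborel. (cmod (u t))^2 * wt h \<beta> t)"
    unfolding ip_def by (simp only: set_integral_complex_of_real[symmetric])
  moreover have "0 \<le> (LINT t:{0<..<Th \<rho> h}|lborel. (cmod (u t))^2 * wt h \<beta> t)"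
    by (rule set_integral_nonneg) (use assms in simp)
  ultimately show ?thesis
    unfolding nrm_def by simp
qed

lemma ip_vh_eq:
  "ip \<rho> h \<beta> g (vh \<rho> chi h \<beta>) = of_real (ch \<rho> chi h \<beta>) *
     (LINT t:{0<..<Th \<rho> h}|lborel. g t * of_real (chi (t / Th \<rho> h) * uapp h \<beta> t * wt h \<beta> t))"
  unfolding ip_def vh_def w0_def by (simp add: set_integral_mult_right[symmetric] mult_ac)

lemma vh_orthogonal_Robin_inequality:
  assumes "cutoff_ground_state (Th \<rho> h) h \<beta> chi" and H1: "H1_deriv (Th \<rho> h) g dg"
    and orth: "ip \<rho> h \<beta> g (vh \<rho> chi h \<beta>) = 0" and h: "0 < h"
  shows "1/25 * h powr (1 - 2 * \<rho>) * (nrm \<rho> h \<beta> g)^2 \<le> (nrm \<rho> h \<beta> dg)^2 - (cmod (g 0))^2"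
proof -
  interpret cutoff_ground_state "Th \<rho> h" h \<beta> chi by fact
  have nrm_sq: "(nrm \<rho> h \<beta> u)^2 = (LINT t:{0<..<Th \<rho> h}|lborel. (cmod (u t))^2 * wt h \<beta> t)" for u
    by (rule nrm_sq_eq) (use wt_bounds(1) in force)
  have "(nrm \<rho> h \<beta> (w0 \<rho> chi h \<beta>))^2 = (LINT t:{0<..<Th \<rho> h}|lborel. (profile t)^2 * wt h \<beta> t)"
    unfolding nrm_sq w0_def profile_def by (simp add: norm_mult power_mult_distrib)
  \<comment> \<open>c_h = 1 / ||w0|| would be the junk value 0, making orthogonality vacuous, if ||w0|| = 0\<close>
  then have "ch \<rho> chi h \<beta> \<noteq> 0"
    unfolding ch_def using profile_sq_integral_pos by auto
  then have "(LINT t:{0<..<Th \<rho> h}|lborel. g t * of_real (profile t * wt h \<beta> t)) = 0"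
    using orth unfolding ip_vh_eq profile_def by simp
  from orthogonal_Robin_form_lower_bound[OF H1 this]
  show ?thesis
    unfolding nrm_sq powr_eq_inverse_Th_sq[OF h] by simp
qed

section \<open>Choice of h\<close>

lemma small_h_bounds:
  fixes \<rho> M :: real
  assumes \<rho>: "0 < \<rho>" "\<rho> < 1/2" and M: "0 < M"
  obtains h0 where "0 < h0"
    and "\<And>h. 0 < h \<Longrightarrow> h \<le> h0 \<Longrightarrow> 200 \<le> Th \<rho> h"
    and "\<And>h. 0 < h \<Longrightarrow> h \<le> h0 \<Longrightarrow> M * h powr \<rho> \<le> 1/100"
    and "\<And>h. 0 < h \<Longrightarrow> h \<le> h0 \<Longrightarrow> M^2 * h \<le> 1/200"
proof
  define h1 where "h1 = 200 powr (1 / (\<rho> - 1/2))"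
  define h2 where "h2 = (1 / (100 * M)) powr (1 / \<rho>)"
  define h3 where "h3 = 1 / (200 * M^2)"
  show "0 < min h1 (min h2 h3)"
    unfolding h1_def h2_def h3_def using M by simp
  fix h assume h: "0 < h" "h \<le> min h1 (min h2 h3)"
  have "200 = h1 powr (\<rho> - 1/2)"
    unfolding h1_def using \<rho> by (simp add: powr_powr)
  also have "\<dots> \<le> h powr (\<rho> - 1/2)"
    using h \<rho> by (intro powr_mono2') auto
  finally show "200 \<le> Th \<rho> h"
    unfolding Th_def .
  have "h powr \<rho> \<le> h2 powr \<rho>"
    using h \<rho> by (intro powr_mono2) auto
  also have "\<dots> = 1 / (100 * M)"
    unfolding h2_def using \<rho> M by (simp add: powr_powr)
  finally show "M * h powr \<rho> \<le> 1/100"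
    using M by (simp add: field_simps)
  have "M^2 * h \<le> M^2 * h3"
    using h by (intro mult_left_mono) auto
  then show "M^2 * h \<le> 1/200"
    unfolding h3_def using M by simp
qed

lemma smooth_real_imp_continuous: "smooth_real f \<Longrightarrow> continuous_on UNIV f"
  unfolding smooth_real_def
  by (metis DERIV_isCont continuous_at_imp_continuous_on)

lemma cutoff_ground_state_small_h:
  fixes \<rho> M \<beta> :: real and chi :: "real \<Rightarrow> real"
  assumes \<rho>: "0 < \<rho>" "\<rho> < 1/2" and M: "0 < M" "\<bar>\<beta>\<bar> \<le> M"
    and chi: "continuous_on UNIV chi" "\<And>x. 0 \<le> chi x \<and> chi x \<le> 1"
      "\<And>x. x \<in> {0..1/2} \<Longrightarrow> chi x = 1"
  obtains h0 where "0 < h0" "\<And>h. 0 < h \<Longrightarrow> h \<le> h0 \<Longrightarrow> cutoff_ground_state (Th \<rho> h) h \<beta> chi"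
proof -
  obtain h0 where h0: "0 < h0"
    and T_ge: "\<And>h. 0 < h \<Longrightarrow> h \<le> h0 \<Longrightarrow> 200 \<le> Th \<rho> h"
    and Mh: "\<And>h. 0 < h \<Longrightarrow> h \<le> h0 \<Longrightarrow> M * h powr \<rho> \<le> 1/100"
    and M2h: "\<And>h. 0 < h \<Longrightarrow> h \<le> h0 \<Longrightarrow> M^2 * h \<le> 1/200"
    using small_h_bounds[OF \<rho> M(1)] by blast
  have "cutoff_ground_state (Th \<rho> h) h \<beta> chi" if h: "0 < h" "h \<le> h0" for h
  proof
    have "\<beta>^2 \<le> M^2"
      using M abs_le_square_iff[of \<beta> M] by auto
    then show "\<beta>^2 * h \<le> 1/200"
      using M2h[OF h] mult_right_mono[of "\<beta>^2" "M^2" h] h(1) by linarith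
    fix t assume t: "t \<in> {0<..<Th \<rho> h}"
    have "\<bar>wt h \<beta> t - 1\<bar> = sqrt h * (\<bar>\<beta>\<bar> * t)"
      using t h by (simp add: wt_def abs_mult)
    also have "\<dots> \<le> sqrt h * (M * Th \<rho> h)"
      using t M(2) h(1) by (intro mult_left_mono mult_mono) auto
    also have "\<dots> = M * h powr \<rho>"
      using sqrt_mult_Th[OF h(1), of \<rho>] by (simp add: mult.left_commute[of "sqrt h"])
    finally show "\<bar>wt h \<beta> t - 1\<bar> \<le> 1/100"
      using Mh[OF h] by simp
  qed (use T_ge[OF h] h chi in auto)
  with h0 show ?thesis
    using that by blast
qed

text \<open>Of the hypotheses only 0 < \<rho> (from 1/3 < \<rho>), the continuity of chi, its range and
  its values on [0, 1/2] are used.\<close>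

theorem lemma4p3:
  fixes \<rho> M \<beta> :: real and chi :: "real \<Rightarrow> real"
  assumes "1/3 < \<rho>" "\<rho> < 1/2" "M > 0" "\<beta> \<in> {-M..M}"
    and "smooth_real chi" "\<forall>x. 0 \<le> chi x \<and> chi x \<le> 1"
    and "tsupp chi \<subseteq> {-1<..<1}" "\<forall>x\<in>{-1/2..1/2}. chi x = 1"
  shows "\<exists>m h0. m > 0 \<and> h0 > 0 \<and>
    (\<forall>h g dg. 0 < h \<and> h \<le> h0 \<and> H1_deriv (Th \<rho> h) g dg \<and>
        ip \<rho> h \<beta> g (vh \<rho> chi h \<beta>) = 0 \<longrightarrow>
        (nrm \<rho> h \<beta> dg)^2 - (cmod (g 0))^2 \<ge> m * h powr (1 - 2*\<rho>) * (nrm \<rho> h \<beta> g)^2)"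
proof -
  obtain h0 where h0: "0 < h0"
    and cutoff: "\<And>h. 0 < h \<Longrightarrow> h \<le> h0 \<Longrightarrow> cutoff_ground_state (Th \<rho> h) h \<beta> chi"
  proof (rule cutoff_ground_state_small_h[of \<rho> M \<beta> chi])
    show "continuous_on UNIV chi"
      using assms(5) by (rule smooth_real_imp_continuous)
  qed (use assms(1-4,6,8) in auto)
  have main: "1/25 * h powr (1 - 2 * \<rho>) * (nrm \<rho> h \<beta> g)^2 \<le> (nrm \<rho> h \<beta> dg)^2 - (cmod (g 0))^2"
    if "0 < h" "h \<le> h0" "H1_deriv (Th \<rho> h) g dg" "ip \<rho> h \<beta> g (vh \<rho> chi h \<beta>) = 0" for h g dg
    using vh_orthogonal_Robin_inequality[OF cutoff that(3,4,1)] that(1,2) .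
  show ?thesis
    by (rule exI[of _ "1/25"], rule exI[of _ h0]) (use h0 main in auto)
qed

end
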